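(* Let a countable group $G$ act on a set $X$, let $\Phi=(\ell,\phi,\mathcal{Z},\Gamma,\mathcal{H})$ be a chart for $G$, let $\epsilon>0$, let $q$ satisfy $6\epsilon<q<1-\epsilon$, and let $A\subseteq\mathbb{Z}^\ell\times\Gamma$ be a centered rectangle. Let $E$ be a $(\Phi,A,\epsilon)$-rectangular equivalence relation on $X$ and suppose the $E$-class $U$ is $(\Phi,\delta)$-roughly $B$ at $x\in X^{\mathcal{H}}$, where $B$ is a rectangle with $A\sqsubseteq B$, $2^{22\ell}\cdot B\subseteq\mathrm{dom}(\phi)$, and $2\delta\cdot B\sqsubseteq\epsilon\cdot A$. Writing $b=\mathrm{L}(B)$, for each $1\le i\le\ell$, $$\partial_i^\Phi(E,q\cdot A)\cap U\subseteq\phi\big(-b_i\cdot e_i+B^i+2q\cdot A\big)\cdot x\ \cup\ \phi\big(b_i\cdot e_i+B^i+2q\cdot A\big)\cdot x.$$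
   Context: Rectangles: Let $\Gamma$ be a finite additive abelian group with identity $0_\Gamma$ and $\ell\in\mathbb{N}$. Elements $v$ of $\mathbb{R}^\ell\times\Gamma$ have coordinates $v_1,\dots,v_\ell\in\mathbb{R}$, $v_{\ell+1}\in\Gamma$; $\mathbf{0}$ has first $\ell$ coordinates $0$, last $0_\Gamma$; $e_i$ has $i$-th coordinate $1$, other real coordinates $0$, last $0_\Gamma$; $\lambda\cdot v=(\lambda v_1,\dots,\lambda v_\ell,v_{\ell+1})$. $\mathrm{Rec}(a)=\{b\in\mathbb{Z}^\ell\times\Gamma: -|a_i|\le b_i\le|a_i|,\ 1\le i\le\ell\}$. A rectangle is $c+\mathrm{Rec}(a)$ with $c,a\in\mathbb{Z}^\ell\times\Gamma$; uniquely written with center $c\in\mathbb{Z}^\ell\times\{0_\Gamma\}$ and radius vector $\mathrm{L}(A)=a\in\mathbb{N}^\ell\times\{0_\Gamma\}$, entries $\mathrm{L}_i(A)$. Centered means center $\mathbf{0}$. $A\sqsubseteq B$ means $\mathrm{L}_i(A)\le\mathrm{L}_i(B)$ for all $i$. For $\lambda>0$, $\lambda\cdot A=c+\mathrm{Rec}(\lambda\cdot\mathrm{L}(A))$ ($c$ the center of $A$). $A^i=c+\mathrm{Rec}(\mathrm{L}(A)-\mathrm{L}_i(A)\cdot e_i)$. Sums are elementwise. Charts: a chart for $G$ is $\Phi=(\ell,\phi,\mathcal{Z},\Gamma,\mathcal{H})$ with $\mathcal{H}$ a finite collection of pairwise conjugate subgroups of $G$, $\Gamma$ finite abelian, $\mathcal{Z}$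 a centered rectangle with all $\mathrm{L}_i(\mathcal{Z})>0$, $\phi$ an injective map into $G$ with $\mathrm{dom}(\phi)$ a centered rectangle containing $3\cdot\mathcal{Z}$, $\phi(\mathbf{0})=1_G$, and for all $r,s\in\mathrm{dom}(\phi)$, $H\in\mathcal{H}$: $\phi(r)H=\phi(s)H\Rightarrow r=s$; $r+s+\mathcal{Z}\subseteq\mathrm{dom}(\phi)\Rightarrow\exists z\in\mathcal{Z}:\phi(r)\phi(s)H=\phi(r+s+z)H$; $r-s+\mathcal{Z}\subseteq\mathrm{dom}(\phi)\Rightarrow\exists z:\phi(r)\phi(s)^{-1}H=\phi(r-s+z)H$; $-r+s+\mathcal{Z}\subseteq\mathrm{dom}(\phi)\Rightarrow\exists z:\phi(r)^{-1}\phi(s)H=\phi(-r+s+z)H$; $-s+\mathcal{Z}\subseteq\mathrm{dom}(\phi)\Rightarrow\exists z:\phi(s)^{-1}H=\phi(-s+z)H$. $\phi(S)\cdot x=\{\phi(s)\cdot x:s\in S\}$; $X^{\mathcal{H}}=\{x\in X:\mathrm{Stab}(x)\in\mathcal{H}\}$. Rough rectangles: for a rectangle $B$ with $2\cdot B\subseteq\mathrm{dom}(\phi)$, $x\in X^{\mathcal{H}}$, $0<\delta<1$, $R\subseteq X$ is $(\Phi,\delta)$-roughly $B$ at $x$ if $2\cdot\mathcal{Z}\sqsubseteq\delta\cdot B$ and $\phi((1-\delta)\cdot B)\cdot x\subseteq R\subseteq\phi((1+\delta)\cdot B)\cdot x$. Rectangular: for $A$ centered and $0<\epsilon<1$, $E$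 is $(\Phi,A,\epsilon)$-rectangular if every $E$-class not meeting $X^{\mathcal{H}}$ is a singleton and every $E$-class $U$ meeting $X^{\mathcal{H}}$ is $(\Phi,\delta)$-roughly $B$ at some point of $X^{\mathcal{H}}$ for some $\delta>0$ and rectangle $B$ with $A\sqsubseteq B$, $2^{22\ell}\cdot B\subseteq\mathrm{dom}(\phi)$, $2\delta\cdot B\sqsubseteq\epsilon\cdot A$. Boundary: for $A'\subseteq\mathrm{dom}(\phi)$ centered and $1\le i\le\ell$, $\partial_i^\Phi(E,A')$ is the set of $x\in X^{\mathcal{H}}$ with $[\phi(A'^i-\mathrm{L}_i(A')\cdot e_i)\cdot x]_E\cap[\phi(A'^i+\mathrm{L}_i(A')\cdot e_i)\cdot x]_E=\varnothing$, $[Y]_E$ denoting the $E$-saturation. *)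

theory Defs
  imports Complex_Main "HOL-Algebra.Group_Action" "HOL-Library.Function_Algebras"
    "HOL-Library.Product_Plus" "HOL-Library.Countable_Set"
begin

text \<open>Elements of Z^l x Gamma: an integer vector indexed by 1..l (zero outside) and an element
  of the finite abelian group Gamma (a type of class finite, ab_group_add).\<close>
type_synonym 'g pt = "(nat \<Rightarrow> int) \<times> 'g"

definition normvec :: "nat \<Rightarrow> (nat \<Rightarrow> 'b::zero) \<Rightarrow> bool" where
  "normvec l f \<longleftrightarrow> (\<forall>i. i \<notin> {1..l} \<longrightarrow> f i = 0)"

definition Rec :: "nat \<Rightarrow> (nat \<Rightarrow> real) \<Rightarrow> ('g::zero) pt set" where
  "Rec l a = {p. normvec l (fst p) \<and>
      (\<forall>i\<in>{1..l}. - \<bar>a i\<bar> \<le> real_of_int (fst p i) \<and> real_of_int (fst p i) \<le> \<bar>a i\<bar>)}"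

definition rect :: "nat \<Rightarrow> (nat \<Rightarrow> int) \<Rightarrow> (nat \<Rightarrow> real) \<Rightarrow> ('g::monoid_add) pt set" where
  "rect l c a = (\<lambda>r. (c, 0) + r) ` Rec l a"

text \<open>L_i(c + Rec(a)) = floor |a_i|; A \<sqsubseteq> B compares these entries.\<close>
definition rect_le :: "nat \<Rightarrow> (nat \<Rightarrow> real) \<Rightarrow> (nat \<Rightarrow> real) \<Rightarrow> bool" where
  "rect_le l a b \<longleftrightarrow> (\<forall>i\<in>{1..l}. \<lfloor>\<bar>a i\<bar>\<rfloor> \<le> \<lfloor>\<bar>b i\<bar>\<rfloor>)"

definition unitv :: "nat \<Rightarrow> nat \<Rightarrow> int" where
  "unitv i = (\<lambda>j. if j = i then 1 else 0)"

definition msum :: "'a::plus set \<Rightarrow> 'a set \<Rightarrow> 'a set" where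
  "msum S T = {s + t | s t. s \<in> S \<and> t \<in> T}"

definition domset :: "nat \<Rightarrow> (nat \<Rightarrow> nat) \<Rightarrow> ('g::monoid_add) pt set" where
  "domset l d = rect l 0 (\<lambda>i. real (d i))"

definition phi_img :: "('b \<Rightarrow> 'x \<Rightarrow> 'x) \<Rightarrow> nat \<Rightarrow> (('g::monoid_add) pt \<Rightarrow> 'b) \<Rightarrow> (nat \<Rightarrow> nat)
      \<Rightarrow> 'g pt set \<Rightarrow> 'x \<Rightarrow> 'x set" where
  "phi_img act l \<phi> d S x = {act (\<phi> s) x | s. s \<in> S \<inter> domset l d}"

text \<open>Chart (l, phi, Z, Gamma, H): Gamma is the type 'g, Z = Rec(z), dom(phi) = Rec(d).\<close>
definition chart :: "('b, 'm) monoid_scheme \<Rightarrow> nat \<Rightarrow> (('g::{finite,ab_group_add}) pt \<Rightarrow> 'b)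
     \<Rightarrow> (nat \<Rightarrow> nat) \<Rightarrow> (nat \<Rightarrow> nat) \<Rightarrow> 'b set set \<Rightarrow> bool" where
  "chart G l \<phi> z d \<H> \<longleftrightarrow>
     finite \<H> \<and> (\<forall>H\<in>\<H>. subgroup H G) \<and>
     (\<forall>H\<in>\<H>. \<forall>K\<in>\<H>. \<exists>g\<in>carrier G. K = (g <#\<^bsub>G\<^esub> H) #>\<^bsub>G\<^esub> inv\<^bsub>G\<^esub> g) \<and>
     normvec l z \<and> (\<forall>i\<in>{1..l}. z i > 0) \<and> normvec l d \<and>
     inj_on \<phi> (domset l d) \<and> \<phi> ` domset l d \<subseteq> carrier G \<and>
     (rect l 0 (\<lambda>i. 3 * real (z i)) :: 'g pt set) \<subseteq> domset l d \<and>
     \<phi> 0 = \<one>\<^bsub>G\<^esub> \<and>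
     (\<forall>r\<in>domset l d. \<forall>s\<in>domset l d. \<forall>H\<in>\<H>.
        (\<phi> r <#\<^bsub>G\<^esub> H = \<phi> s <#\<^bsub>G\<^esub> H \<longrightarrow> r = s) \<and>
        ((\<lambda>v. r + s + v) ` rect l 0 (\<lambda>i. real (z i)) \<subseteq> domset l d \<longrightarrow>
           (\<exists>v\<in>rect l 0 (\<lambda>i. real (z i)).
              (\<phi> r \<otimes>\<^bsub>G\<^esub> \<phi> s) <#\<^bsub>G\<^esub> H = \<phi> (r + s + v) <#\<^bsub>G\<^esub> H)) \<and>
        ((\<lambda>v. r - s + v) ` rect l 0 (\<lambda>i. real (z i)) \<subseteq> domset l d \<longrightarrow>
           (\<exists>v\<in>rect l 0 (\<lambda>i. real (z i)).
              (\<phi> r \<otimes>\<^bsub>G\<^esub> inv\<^bsub>G\<^esub> \<phi> s) <#\<^bsub>G\<^esub> H = \<phi> (r - s + v) <#\<^bsub>G\<^esub> H)) \<and>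
        ((\<lambda>v. - r + s + v) ` rect l 0 (\<lambda>i. real (z i)) \<subseteq> domset l d \<longrightarrow>
           (\<exists>v\<in>rect l 0 (\<lambda>i. real (z i)).
              (inv\<^bsub>G\<^esub> \<phi> r \<otimes>\<^bsub>G\<^esub> \<phi> s) <#\<^bsub>G\<^esub> H = \<phi> (- r + s + v) <#\<^bsub>G\<^esub> H)) \<and>
        ((\<lambda>v. - s + v) ` rect l 0 (\<lambda>i. real (z i)) \<subseteq> domset l d \<longrightarrow>
           (\<exists>v\<in>rect l 0 (\<lambda>i. real (z i)).
              inv\<^bsub>G\<^esub> \<phi> s <#\<^bsub>G\<^esub> H = \<phi> (- s + v) <#\<^bsub>G\<^esub> H)))"

definition XH :: "('b, 'm) monoid_scheme \<Rightarrow> ('b \<Rightarrow> 'x \<Rightarrow> 'x) \<Rightarrow> 'x set \<Rightarrow> 'b set set \<Rightarrow> 'x set" where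
  "XH G act X \<H> = {x \<in> X. stabilizer G act x \<in> \<H>}"

text \<open>R is (Phi,delta)-roughly B at x, where B has centre c and radius vector b.\<close>
definition roughly :: "('b, 'm) monoid_scheme \<Rightarrow> ('b \<Rightarrow> 'x \<Rightarrow> 'x) \<Rightarrow> 'x set \<Rightarrow> nat
     \<Rightarrow> (('g::{finite,ab_group_add}) pt \<Rightarrow> 'b) \<Rightarrow> (nat \<Rightarrow> nat) \<Rightarrow> (nat \<Rightarrow> nat) \<Rightarrow> 'b set set
     \<Rightarrow> real \<Rightarrow> (nat \<Rightarrow> int) \<Rightarrow> (nat \<Rightarrow> nat) \<Rightarrow> 'x \<Rightarrow> 'x set \<Rightarrow> bool" where
  "roughly G act X l \<phi> z d \<H> \<delta> c b x R \<longleftrightarrow>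
     (rect l c (\<lambda>i. 2 * real (b i)) :: 'g pt set) \<subseteq> domset l d \<and> x \<in> XH G act X \<H> \<and>
     0 < \<delta> \<and> \<delta> < 1 \<and>
     rect_le l (\<lambda>i. 2 * real (z i)) (\<lambda>i. \<delta> * real (b i)) \<and>
     phi_img act l \<phi> d (rect l c (\<lambda>i. (1 - \<delta>) * real (b i))) x \<subseteq> R \<and>
     R \<subseteq> phi_img act l \<phi> d (rect l c (\<lambda>i. (1 + \<delta>) * real (b i))) x"

text \<open>E is (Phi, A, epsilon)-rectangular, A the centered rectangle with radius vector a.\<close>
definition rectangular :: "('b, 'm) monoid_scheme \<Rightarrow> ('b \<Rightarrow> 'x \<Rightarrow> 'x) \<Rightarrow> 'x set \<Rightarrow> nat
     \<Rightarrow> (('g::{finite,ab_group_add}) pt \<Rightarrow> 'b) \<Rightarrow> (nat \<Rightarrow> nat) \<Rightarrow> (nat \<Rightarrow> nat) \<Rightarrow> 'b set set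
     \<Rightarrow> (nat \<Rightarrow> nat) \<Rightarrow> real \<Rightarrow> ('x \<times> 'x) set \<Rightarrow> bool" where
  "rectangular G act X l \<phi> z d \<H> a \<epsilon> E \<longleftrightarrow>
     (\<forall>y\<in>X. E `` {y} \<inter> XH G act X \<H> = {} \<longrightarrow> E `` {y} = {y}) \<and>
     (\<forall>y\<in>X. E `` {y} \<inter> XH G act X \<H> \<noteq> {} \<longrightarrow>
        (\<exists>x'\<in>XH G act X \<H>. \<exists>\<delta>>0. \<exists>c b. normvec l c \<and> normvec l b \<and>
           rect_le l (\<lambda>i. real (a i)) (\<lambda>i. real (b i)) \<and>
           (rect l c (\<lambda>i. 2 ^ (22 * l) * real (b i)) :: 'g pt set) \<subseteq> domset l d \<and>
           rect_le l (\<lambda>i. 2 * \<delta> * real (b i)) (\<lambda>i. \<epsilon> * real (a i)) \<and>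
           roughly G act X l \<phi> z d \<H> \<delta> c b x' (E `` {y})))"

definition bdry :: "('b, 'm) monoid_scheme \<Rightarrow> ('b \<Rightarrow> 'x \<Rightarrow> 'x) \<Rightarrow> 'x set \<Rightarrow> nat
     \<Rightarrow> (('g::{finite,ab_group_add}) pt \<Rightarrow> 'b) \<Rightarrow> (nat \<Rightarrow> nat) \<Rightarrow> 'b set set
     \<Rightarrow> ('x \<times> 'x) set \<Rightarrow> (nat \<Rightarrow> real) \<Rightarrow> nat \<Rightarrow> 'x set" where
  "bdry G act X l \<phi> d \<H> E a' i =
     {x \<in> XH G act X \<H>.
        E `` phi_img act l \<phi> d (rect l (\<lambda>j. - \<lfloor>\<bar>a' i\<bar>\<rfloor> * unitv i j) (a'(i := 0))) x \<inter>
        E `` phi_img act l \<phi> d (rect l (\<lambda>j. \<lfloor>\<bar>a' i\<bar>\<rfloor> * unitv i j) (a'(i := 0))) x = {}}"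

end

theory Submission
  imports Defs
begin

text \<open>Write y = \<phi>(r)x for a point y of U, with r in c + Rec((1+\<delta>)b). If r were deep inside
  the slab in direction i, namely |r_i - c_i| + 2qa_i < b_i, then both opposite faces
  \<plusminus>\<lfloor>qa_i\<rfloor>e_i + (qA)^i around y would meet U: moving r towards c by at most \<lfloor>qa_j\<rfloor> in
  each direction j \<noteq> i and by \<plusminus>\<lfloor>qa_i\<rfloor> in direction i lands, even after the chart error from Z,
  in c + Rec((1-\<delta>)b), whose image lies in U. Then both faces would have saturation U, so y is
  not a boundary point. Hence |r_i - c_i| \<ge> b_i - 2qa_i, and r splits as \<plusminus>b_ie_i plus a point
  of B^i plus an error in Rec(2qa), because r overshoots B by at most \<delta>b_j \<le> qa_j in every
  direction. The hypotheses 6\<epsilon> < q and 2\<delta>B \<sqsubseteq> \<epsilon>A are what make \<delta>b and the chart error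
  small compared with qa.\<close>

lemma mem_rect_iff:
  "(p::('g::ab_group_add) pt) \<in> rect l c a \<longleftrightarrow> normvec l (\<lambda>j. fst p j - c j) \<and>
     (\<forall>j\<in>{1..l}. \<bar>real_of_int (fst p j - c j)\<bar> \<le> \<bar>a j\<bar>)"
  (is "_ \<longleftrightarrow> ?coords")
proof
  assume "p \<in> rect l c a"
  then obtain r where r: "r \<in> Rec l a" "p = (c, 0) + r" unfolding rect_def by auto
  then have "(\<lambda>j. fst p j - c j) = fst r" by auto
  with r(1) show ?coords
    unfolding Rec_def by (auto simp: abs_le_iff fun_eq_iff)
next
  assume ?coords
  then have "(fst p - c, snd p) \<in> Rec l a" unfolding Rec_def by (auto simp: abs_le_iff fun_diff_def)
  moreover have "p = (c, 0) + (fst p - c, snd p)" by (cases p) auto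
  ultimately show "p \<in> rect l c a" unfolding rect_def by blast
qed

lemma rect_mono:
  fixes a a' :: "nat \<Rightarrow> real"
  assumes "\<And>j. j \<in> {1..l} \<Longrightarrow> \<bar>a j\<bar> \<le> \<bar>a' j\<bar>"
  shows "(rect l c a :: ('g::ab_group_add) pt set) \<subseteq> rect l c a'"
proof
  fix p :: "'g pt" assume "p \<in> rect l c a"
  then show "p \<in> rect l c a'"
    using assms unfolding mem_rect_iff by (auto intro: order_trans)
qed

lemma rect_subset_domset_bound:
  assumes "normvec l c" and "(rect l c a :: ('g::ab_group_add) pt set) \<subseteq> domset l d" and "j \<in> {1..l}"
  shows "\<bar>c j\<bar> + \<lfloor>\<bar>a j\<bar>\<rfloor> \<le> int (d j)"
proof -
  define w where "w k = (if k \<in> {1..l} then (if c k \<ge> 0 then 1 else -1) * \<lfloor>\<bar>a k\<bar>\<rfloor> else 0)" for k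
  have "((\<lambda>k. c k + w k), 0::'g) \<in> rect l c a"
    using assms(1) by (auto simp: mem_rect_iff w_def normvec_def)
  then have "((\<lambda>k. c k + w k), 0::'g) \<in> rect l 0 (\<lambda>k. real (d k))"
    using assms(2) unfolding domset_def by blast
  then have "\<bar>real_of_int (c j + w j)\<bar> \<le> real (d j)"
    using assms(3) unfolding mem_rect_iff by auto
  moreover have "\<bar>c j + w j\<bar> = \<bar>c j\<bar> + \<lfloor>\<bar>a j\<bar>\<rfloor>"
    using assms(3) by (simp add: w_def abs_if) (smt (verit) abs_ge_zero zero_le_floor)
  ultimately show ?thesis by linarith
qed

lemma rect_double_subset_domset:
  fixes b :: "nat \<Rightarrow> nat" and D :: "nat \<Rightarrow> real"
  assumes c: "normvec l c" and dom2: "(rect l c (\<lambda>j. 2 * real (b j)) :: ('g::ab_group_add) pt set) \<subseteq> domset l d"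
    and D: "\<And>j. j \<in> {1..l} \<Longrightarrow> 0 \<le> D j \<and> D j \<le> real (b j)"
  shows "rect l c (\<lambda>j. real (b j) - D j) \<subseteq> (domset l d :: 'g pt set)"
    and "rect l 0 (\<lambda>j. real (b j)) \<subseteq> (domset l d :: 'g pt set)"
proof -
  have "rect l c (\<lambda>j. real (b j) - D j) \<subseteq> (rect l c (\<lambda>j. 2 * real (b j)) :: 'g pt set)"
  proof (rule rect_mono)
    fix j assume "j \<in> {1..l}"
    then have "0 \<le> real (b j) - D j" "real (b j) - D j \<le> 2 * real (b j)"
      using D[of j] by auto
    then show "\<bar>real (b j) - D j\<bar> \<le> \<bar>2 * real (b j)\<bar>"
      by simp
  qed
  with dom2 show "rect l c (\<lambda>j. real (b j) - D j) \<subseteq> (domset l d :: 'g pt set)"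
    by blast
  show "rect l 0 (\<lambda>j. real (b j)) \<subseteq> (domset l d :: 'g pt set)"
    unfolding domset_def
  proof (rule rect_mono)
    fix j assume "j \<in> {1..l}"
    then have "\<lfloor>\<bar>2 * real (b j)\<bar>\<rfloor> \<le> int (d j)"
      using rect_subset_domset_bound[OF c dom2, of j] by linarith
    moreover have "\<lfloor>\<bar>2 * real (b j)\<bar>\<rfloor> = 2 * int (b j)"
      by (metis abs_of_nat floor_of_nat of_nat_mult of_nat_numeral)
    ultimately show "\<bar>real (b j)\<bar> \<le> \<bar>real (d j)\<bar>"
      by simp
  qed
qed

lemma image_add_rect_subset:
  fixes p :: "('g::ab_group_add) pt"
  assumes "normvec l (\<lambda>j. fst p j - c j)"
    and "\<And>j. j \<in> {1..l} \<Longrightarrow> \<bar>real_of_int (fst p j - c j)\<bar> + \<bar>\<zeta> j\<bar> \<le> \<bar>R j\<bar>"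
  shows "(\<lambda>w. p + w) ` rect l 0 \<zeta> \<subseteq> rect l c R"
proof (rule image_subsetI)
  fix w :: "'g pt" assume "w \<in> rect l 0 \<zeta>"
  then have w: "normvec l (fst w)" "\<And>j. j \<in> {1..l} \<Longrightarrow> \<bar>real_of_int (fst w j)\<bar> \<le> \<bar>\<zeta> j\<bar>"
    unfolding mem_rect_iff by auto
  show "p + w \<in> rect l c R"
    unfolding mem_rect_iff
  proof (intro conjI ballI)
    show "normvec l (\<lambda>j. fst (p + w) j - c j)"
      using assms(1) w(1) by (simp add: normvec_def)
    fix j assume j: "j \<in> {1..l}"
    have "\<bar>real_of_int (fst (p + w) j - c j)\<bar> \<le> \<bar>real_of_int (fst p j - c j)\<bar> + \<bar>real_of_int (fst w j)\<bar>"
      using abs_triangle_ineq[of "real_of_int (fst p j - c j)" "real_of_int (fst w j)"] by simp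
    then show "\<bar>real_of_int (fst (p + w) j - c j)\<bar> \<le> \<bar>R j\<bar>"
      using assms(2)[OF j] w(2)[OF j] by linarith
  qed
qed

lemma obtain_shift_towards_zero:
  fixes v L :: "nat \<Rightarrow> int"
  assumes "\<And>j. j \<in> {1..l} \<Longrightarrow> 0 \<le> L j"
  obtains t where "\<And>j. j = i \<or> j \<notin> {1..l} \<Longrightarrow> t j = 0"
    and "\<And>j. j \<in> {1..l} \<Longrightarrow> \<bar>real_of_int (t j)\<bar> \<le> L j"
    and "\<And>j. j \<in> {1..l} \<Longrightarrow> j \<noteq> i \<Longrightarrow>
           \<bar>real_of_int (v j + t j)\<bar> = max 0 (\<bar>real_of_int (v j)\<bar> - L j)"
proof
  let ?t = "\<lambda>j. if j = i \<or> j \<notin> {1..l} then 0 else - max (- L j) (min (L j) (v j))"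
  show "?t j = 0" if "j = i \<or> j \<notin> {1..l}" for j
    using that by simp
  show "\<bar>real_of_int (?t j)\<bar> \<le> L j" if "j \<in> {1..l}" for j
    using assms[OF that] by auto
  show "\<bar>real_of_int (v j + ?t j)\<bar> = max 0 (\<bar>real_of_int (v j)\<bar> - L j)" if "j \<in> {1..l}" "j \<noteq> i" for j
    using assms[OF that(1)] that by auto
qed

lemma face_point_inside:
  fixes r :: "('g::ab_group_add) pt" and b z :: "nat \<Rightarrow> nat" and D Q :: "nat \<Rightarrow> real" and \<sigma> :: int
  assumes i: "i \<in> {1..l}" and \<sigma>: "\<bar>\<sigma>\<bar> = 1"
    and r: "r \<in> rect l c (\<lambda>j. real (b j) + D j)"
    and bounds: "\<And>j. j \<in> {1..l} \<Longrightarrow> 0 \<le> D j \<and> 2 * D j + real (z j) \<le> Q j - 1 \<and> Q j \<le> real (b j)"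
    and near: "\<bar>real_of_int (fst r i - c i)\<bar> + 2 * Q i < real (b i)"
  obtains s where "s \<in> rect l (\<lambda>j. \<sigma> * \<lfloor>\<bar>Q i\<bar>\<rfloor> * unitv i j) (Q(i := 0))"
    and "s \<in> rect l 0 (\<lambda>j. real (b j))"
    and "(\<lambda>w. s + r + w) ` rect l 0 (\<lambda>j. real (z j)) \<subseteq> rect l c (\<lambda>j. real (b j) - D j)"
proof -
  define v where "v j = fst r j - c j" for j
  define L where "L j = \<lfloor>Q j\<rfloor>" for j
  have L: "0 \<le> L j" "real_of_int (L j) \<le> Q j" "Q j - 1 < L j" if "j \<in> {1..l}" for j
    using bounds[OF that] unfolding L_def by linarith+
  obtain t where t0: "\<And>j. j = i \<or> j \<notin> {1..l} \<Longrightarrow> t j = 0"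
    and t: "\<And>j. j \<in> {1..l} \<Longrightarrow> \<bar>real_of_int (t j)\<bar> \<le> L j"
    and vt: "\<And>j. j \<in> {1..l} \<Longrightarrow> j \<noteq> i \<Longrightarrow>
               \<bar>real_of_int (v j + t j)\<bar> = max 0 (\<bar>real_of_int (v j)\<bar> - L j)"
    using obtain_shift_towards_zero[of l L i v] L(1) by blast
  define s where "s = (\<lambda>j. t j + \<sigma> * L i * unitv i j, 0::'g)"
  have v: "normvec l v" "\<And>j. j \<in> {1..l} \<Longrightarrow> \<bar>real_of_int (v j)\<bar> \<le> b j + D j"
    using r bounds unfolding mem_rect_iff v_def by auto
  have \<sigma>L: "\<bar>real_of_int (\<sigma> * L i)\<bar> = L i"
    using \<sigma> L(1)[OF i] by (simp add: abs_mult flip: of_int_abs)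
  have s_i: "fst s i = \<sigma> * L i" and s_j: "\<And>j. j \<noteq> i \<Longrightarrow> fst s j = t j"
    using t0 by (simp_all add: s_def unitv_def)
  show ?thesis
  proof
    have QL: "\<lfloor>\<bar>Q i\<bar>\<rfloor> = L i"
      using bounds[OF i] by (simp add: L_def)
    show "s \<in> rect l (\<lambda>j. \<sigma> * \<lfloor>\<bar>Q i\<bar>\<rfloor> * unitv i j) (Q(i := 0))"
      unfolding mem_rect_iff QL
    proof (intro conjI ballI)
      show "normvec l (\<lambda>j. fst s j - \<sigma> * L i * unitv i j)"
        using t0 by (simp add: s_def normvec_def)
      fix j assume j: "j \<in> {1..l}"
      have "\<bar>real_of_int (t j)\<bar> \<le> \<bar>Q j\<bar>"
        using t[OF j] L(2)[OF j] abs_ge_self[of "Q j"] by linarith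
      then show "\<bar>real_of_int (fst s j - \<sigma> * L i * unitv i j)\<bar> \<le> \<bar>(Q(i := 0)) j\<bar>"
        using t0[of i] by (cases "j = i") (simp_all add: s_def)
    qed
    show "s \<in> rect l 0 (\<lambda>j. real (b j))"
      unfolding mem_rect_iff
    proof (intro conjI ballI)
      show "normvec l (\<lambda>j. fst s j - (0::nat \<Rightarrow> int) j)"
        using i t0 by (simp add: s_def normvec_def unitv_def)
      fix j assume j: "j \<in> {1..l}"
      have "\<bar>real_of_int (fst s j)\<bar> \<le> L j"
        using t[OF j] \<sigma>L s_i s_j by (cases "j = i") simp_all
      then show "\<bar>real_of_int (fst s j - (0::nat \<Rightarrow> int) j)\<bar> \<le> \<bar>real (b j)\<bar>"
        using L(2)[OF j] bounds[OF j] by simp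
    qed
    show "(\<lambda>w. s + r + w) ` rect l 0 (\<lambda>j. real (z j)) \<subseteq> rect l c (\<lambda>j. real (b j) - D j)"
    proof (rule image_add_rect_subset)
      show "normvec l (\<lambda>j. fst (s + r) j - c j)"
        using v(1) i t0 by (auto simp: normvec_def s_def v_def unitv_def)
      fix j assume j: "j \<in> {1..l}"
      have "\<bar>real_of_int (fst s j + v j)\<bar> + z j \<le> b j - D j"
      proof (cases "j = i")
        case True
        have "\<bar>real_of_int (\<sigma> * L i + v i)\<bar> \<le> \<bar>real_of_int (\<sigma> * L i)\<bar> + \<bar>real_of_int (v i)\<bar>"
          using abs_triangle_ineq[of "real_of_int (\<sigma> * L i)" "real_of_int (v i)"] by simp
        then show ?thesis
          using True s_i \<sigma>L near L(2)[OF i] bounds[OF i] unfolding v_def by simp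
      next
        case False
        then show ?thesis
          using s_j vt[OF j False] v(2)[OF j] L(3)[OF j] bounds[OF j]
          by (auto simp: max_add_distrib_left add.commute)
      qed
      then show "\<bar>real_of_int (fst (s + r) j - c j)\<bar> + \<bar>real (z j)\<bar> \<le> \<bar>real (b j) - D j\<bar>"
        using bounds[OF j] by (simp add: v_def)
    qed
  qed
qed

lemma mem_shifted_face_sum:
  fixes r :: "('g::ab_group_add) pt" and b :: "nat \<Rightarrow> nat" and e :: "nat \<Rightarrow> real"
  assumes i: "i \<in> {1..l}" and v: "normvec l (\<lambda>j. fst r j - c j)"
    and out: "\<And>j. j \<in> {1..l} \<Longrightarrow> \<bar>real_of_int (fst r j - c j)\<bar> \<le> b j + \<bar>e j\<bar>"
    and far: "real (b i) \<le> \<bar>real_of_int (fst r i - c i)\<bar> + \<bar>e i\<bar>"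
  shows "r \<in> msum {(\<lambda>j. - int (b i) * unitv i j, 0)}
              (msum (rect l c ((\<lambda>j. real (b j))(i := 0))) (rect l 0 e))
          \<union> msum {(\<lambda>j. int (b i) * unitv i j, 0)}
              (msum (rect l c ((\<lambda>j. real (b j))(i := 0))) (rect l 0 e))"
proof -
  define v where "v j = fst r j - c j" for j
  define \<sigma> :: int where "\<sigma> = (if v i \<ge> 0 then 1 else -1)"
  obtain t where t0: "\<And>j. j = i \<or> j \<notin> {1..l} \<Longrightarrow> t j = 0"
    and t: "\<And>j. j \<in> {1..l} \<Longrightarrow> \<bar>real_of_int (t j)\<bar> \<le> b j"
    and vt: "\<And>j. j \<in> {1..l} \<Longrightarrow> j \<noteq> i \<Longrightarrow>
               \<bar>real_of_int (v j + t j)\<bar> = max 0 (\<bar>real_of_int (v j)\<bar> - b j)"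
    using obtain_shift_towards_zero[of l "\<lambda>j. int (b j)" i v] by auto
  define u where "u j = v j + t j - \<sigma> * int (b i) * unitv i j" for j
  have split: "r = (\<lambda>j. \<sigma> * int (b i) * unitv i j, 0) + ((\<lambda>j. c j - t j, 0) + (u, snd r))"
    by (cases r) (auto simp: u_def v_def fun_eq_iff)
  have "(\<lambda>j. c j - t j, 0::'g) \<in> rect l c ((\<lambda>j. real (b j))(i := 0))"
    using t t0 unfolding mem_rect_iff by (auto simp: normvec_def)
  moreover have "(u, snd r) \<in> rect l 0 e"
    unfolding mem_rect_iff
  proof (intro conjI ballI)
    show "normvec l (\<lambda>j. fst (u, snd r) j - (0::nat \<Rightarrow> int) j)"
      using v i t0 by (auto simp: u_def v_def normvec_def unitv_def)
    fix j assume j: "j \<in> {1..l}"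
    show "\<bar>real_of_int (fst (u, snd r) j - (0::nat \<Rightarrow> int) j)\<bar> \<le> \<bar>e j\<bar>"
    proof (cases "j = i")
      case True
      then show ?thesis
        using out[OF j] far t0 by (simp add: u_def v_def unitv_def \<sigma>_def) (smt (verit) of_int_le_iff)
    next
      case False
      then show ?thesis
        using vt[OF j False] out[OF j] by (simp add: u_def v_def unitv_def)
    qed
  qed
  ultimately have "r \<in> msum {(\<lambda>j. \<sigma> * int (b i) * unitv i j, 0)}
                    (msum (rect l c ((\<lambda>j. real (b j))(i := 0))) (rect l 0 e))"
    unfolding msum_def by (subst split) blast
  then show ?thesis
    by (cases "v i \<ge> 0") (auto simp: \<sigma>_def)
qed

lemma (in group_action) act_eq_if_lcos_stabilizer_eq:
  assumes "x \<in> E" "g \<in> carrier G" "h \<in> carrier G"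
    and "g <#\<^bsub>G\<^esub> stabilizer G \<phi> x = h <#\<^bsub>G\<^esub> stabilizer G \<phi> x"
  shows "\<phi> g x = \<phi> h x"
proof -
  interpret group G
    using group_hom group_hom.axioms(1) by blast
  have "g \<in> g <#\<^bsub>G\<^esub> stabilizer G \<phi> x"
    using stabilizer_one_closed[OF assms(1)] assms(2) unfolding l_coset_def by force
  then obtain k where "k \<in> stabilizer G \<phi> x" "g = h \<otimes>\<^bsub>G\<^esub> k"
    using assms(4) unfolding l_coset_def by auto
  then show ?thesis
    using composition_rule[OF assms(1,3)] unfolding stabilizer_def by auto
qed

lemma chart_act_mem_phi_img:
  assumes chart: "chart G l \<phi> z d \<H>" and act: "group_action G X act"
    and x: "x \<in> X" "stabilizer G act x \<in> \<H>"
    and rs: "r \<in> domset l d" "s \<in> domset l d"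
    and S: "(\<lambda>w. s + r + w) ` rect l 0 (\<lambda>j. real (z j)) \<subseteq> S" "S \<subseteq> domset l d"
  shows "act (\<phi> s) (act (\<phi> r) x) \<in> phi_img act l \<phi> d S x"
proof -
  interpret group_action G X act by fact
  interpret group G
    using group_hom group_hom.axioms(1) by blast
  have S_dom: "(\<lambda>w. s + r + w) ` rect l 0 (\<lambda>j. real (z j)) \<subseteq> domset l d"
    using S by blast
  have prod: "\<And>r s H. r \<in> domset l d \<Longrightarrow> s \<in> domset l d \<Longrightarrow> H \<in> \<H> \<Longrightarrow>
      (\<lambda>v. r + s + v) ` rect l 0 (\<lambda>j. real (z j)) \<subseteq> domset l d \<Longrightarrow>
      \<exists>v\<in>rect l 0 (\<lambda>j. real (z j)). (\<phi> r \<otimes>\<^bsub>G\<^esub> \<phi> s) <#\<^bsub>G\<^esub> H = \<phi> (r + s + v) <#\<^bsub>G\<^esub> H"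
    and phi_carrier: "\<phi> ` domset l d \<subseteq> carrier G"
    using chart unfolding chart_def by blast+
  obtain w where w: "w \<in> rect l 0 (\<lambda>j. real (z j))"
    and cos: "(\<phi> s \<otimes>\<^bsub>G\<^esub> \<phi> r) <#\<^bsub>G\<^esub> stabilizer G act x
              = \<phi> (s + r + w) <#\<^bsub>G\<^esub> stabilizer G act x"
    using prod[OF rs(2,1) x(2) S_dom] by blast
  have carrier: "\<phi> s \<in> carrier G" "\<phi> r \<in> carrier G" "\<phi> (s + r + w) \<in> carrier G"
    using phi_carrier rs w S_dom by blast+
  have "act (\<phi> s) (act (\<phi> r) x) = act (\<phi> s \<otimes>\<^bsub>G\<^esub> \<phi> r) x"
    using composition_rule[OF x(1) carrier(1,2)] by simp
  also have "\<dots> = act (\<phi> (s + r + w)) x"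
    using act_eq_if_lcos_stabilizer_eq[OF x(1) _ carrier(3) cos] carrier(1,2) by blast
  finally show ?thesis
    unfolding phi_img_def using w S by blast
qed

lemma quotient_class_meets_Image:
  assumes "equiv X E" "U \<in> X // E" "U \<inter> P \<noteq> {}" "U \<inter> Q \<noteq> {}"
  shows "E `` P \<inter> E `` Q \<noteq> {}"
proof -
  obtain y1 y2 where y: "y1 \<in> U \<inter> P" "y2 \<in> U \<inter> Q"
    using assms(3,4) by blast
  then have "(y1, y2) \<in> E" "(y2, y2) \<in> E"
    using in_quotient_imp_in_rel[OF assms(1,2)] by auto
  then show ?thesis
    using y by blast
qed

lemma class_meets_shifted_face:
  fixes r :: "('g::{finite,ab_group_add}) pt" and b z :: "nat \<Rightarrow> nat" and D Q :: "nat \<Rightarrow> real"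
  assumes chart: "chart G l \<phi> z d \<H>" and act: "group_action G X act"
    and x: "x \<in> X" "stabilizer G act x \<in> \<H>"
    and inner: "phi_img act l \<phi> d (rect l c (\<lambda>j. real (b j) - D j)) x \<subseteq> U"
    and inner_dom: "rect l c (\<lambda>j. real (b j) - D j) \<subseteq> (domset l d :: 'g pt set)"
    and face_dom: "rect l 0 (\<lambda>j. real (b j)) \<subseteq> (domset l d :: 'g pt set)"
    and r: "r \<in> rect l c (\<lambda>j. real (b j) + D j)" "r \<in> domset l d"
    and i: "i \<in> {1..l}" and \<sigma>: "\<bar>\<sigma>\<bar> = 1"
    and bounds: "\<And>j. j \<in> {1..l} \<Longrightarrow> 0 \<le> D j \<and> 2 * D j + real (z j) \<le> Q j - 1 \<and> Q j \<le> real (b j)"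
    and near: "\<bar>real_of_int (fst r i - c i)\<bar> + 2 * Q i < real (b i)"
  shows "U \<inter> phi_img act l \<phi> d (rect l (\<lambda>j. \<sigma> * \<lfloor>\<bar>Q i\<bar>\<rfloor> * unitv i j) (Q(i := 0))) (act (\<phi> r) x) \<noteq> {}"
proof -
  obtain s where face: "s \<in> rect l (\<lambda>j. \<sigma> * \<lfloor>\<bar>Q i\<bar>\<rfloor> * unitv i j) (Q(i := 0))"
    and "s \<in> rect l 0 (\<lambda>j. real (b j))"
    and inside: "(\<lambda>w. s + r + w) ` rect l 0 (\<lambda>j. real (z j)) \<subseteq> rect l c (\<lambda>j. real (b j) - D j)"
    by (rule face_point_inside[OF i \<sigma> r(1) bounds near])
  then have s_dom: "s \<in> domset l d"
    using face_dom by blast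
  have "act (\<phi> s) (act (\<phi> r) x) \<in> U"
    using chart_act_mem_phi_img[OF chart act x r(2) s_dom inside inner_dom] inner by blast
  moreover have "act (\<phi> s) (act (\<phi> r) x) \<in>
      phi_img act l \<phi> d (rect l (\<lambda>j. \<sigma> * \<lfloor>\<bar>Q i\<bar>\<rfloor> * unitv i j) (Q(i := 0))) (act (\<phi> r) x)"
    unfolding phi_img_def using face s_dom by blast
  ultimately show ?thesis
    by blast
qed

lemma bdry_inter_rough_class_subset:
  fixes \<phi> :: "('g::{finite,ab_group_add}) pt \<Rightarrow> 'b" and b z :: "nat \<Rightarrow> nat" and D Q e :: "nat \<Rightarrow> real"
  assumes chart: "chart G l \<phi> z d \<H>" and act: "group_action G X act"
    and E: "equiv X E" "U \<in> X // E"
    and x: "x \<in> X" "stabilizer G act x \<in> \<H>"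
    and inner: "phi_img act l \<phi> d (rect l c (\<lambda>j. real (b j) - D j)) x \<subseteq> U"
    and outer: "U \<subseteq> phi_img act l \<phi> d (rect l c (\<lambda>j. real (b j) + D j)) x"
    and inner_dom: "rect l c (\<lambda>j. real (b j) - D j) \<subseteq> (domset l d :: 'g pt set)"
    and face_dom: "rect l 0 (\<lambda>j. real (b j)) \<subseteq> (domset l d :: 'g pt set)"
    and i: "i \<in> {1..l}"
    and bounds: "\<And>j. j \<in> {1..l} \<Longrightarrow> 0 \<le> D j \<and> 2 * D j + real (z j) \<le> Q j - 1 \<and> Q j \<le> real (b j)"
    and e: "\<And>j. j \<in> {1..l} \<Longrightarrow> 2 * Q j \<le> \<bar>e j\<bar>"
  shows "bdry G act X l \<phi> d \<H> E Q i \<inter> U \<subseteq>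
           phi_img act l \<phi> d (msum {(\<lambda>j. - int (b i) * unitv i j, 0)}
             (msum (rect l c ((\<lambda>j. real (b j))(i := 0))) (rect l 0 e))) x
         \<union> phi_img act l \<phi> d (msum {(\<lambda>j. int (b i) * unitv i j, 0)}
             (msum (rect l c ((\<lambda>j. real (b j))(i := 0))) (rect l 0 e))) x"
    (is "_ \<subseteq> ?faces")
proof
  fix y assume y: "y \<in> bdry G act X l \<phi> d \<H> E Q i \<inter> U"
  obtain r where r: "r \<in> rect l c (\<lambda>j. real (b j) + D j)" "r \<in> domset l d" and y_r: "y = act (\<phi> r) x"
    using y outer unfolding phi_img_def by blast
  have far: "real (b i) \<le> \<bar>real_of_int (fst r i - c i)\<bar> + 2 * Q i"
  proof (rule ccontr)
    assume "\<not> ?thesis"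
    then have "U \<inter> phi_img act l \<phi> d (rect l (\<lambda>j. \<sigma> * \<lfloor>\<bar>Q i\<bar>\<rfloor> * unitv i j) (Q(i := 0))) y \<noteq> {}"
      if "\<bar>\<sigma>\<bar> = 1" for \<sigma>
      using class_meets_shifted_face[OF chart act x inner inner_dom face_dom r i that bounds] y_r
      by simp
    from this[of "-1"] this[of 1] show False
      using quotient_class_meets_Image[OF E] y unfolding bdry_def by auto
  qed
  have "r \<in> msum {(\<lambda>j. - int (b i) * unitv i j, 0)}
              (msum (rect l c ((\<lambda>j. real (b j))(i := 0))) (rect l 0 e))
          \<union> msum {(\<lambda>j. int (b i) * unitv i j, 0)}
              (msum (rect l c ((\<lambda>j. real (b j))(i := 0))) (rect l 0 e))"
  proof (rule mem_shifted_face_sum[OF i])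
    fix j assume "j \<in> {1..l}"
    then show "\<bar>real_of_int (fst r j - c j)\<bar> \<le> real (b j) + \<bar>e j\<bar>"
      using r(1) bounds e unfolding mem_rect_iff by force
  qed (use r(1) far e[OF i] in \<open>auto simp: mem_rect_iff\<close>)
  then show "y \<in> ?faces"
    using r(2) y_r unfolding phi_img_def by blast
qed

lemma rough_scale_bounds:
  fixes \<alpha> \<beta> \<zeta> :: nat and \<delta> \<epsilon> q :: real
  assumes "0 < \<delta>" "0 < \<epsilon>" "6 * \<epsilon> < q" "q < 1 - \<epsilon>" "0 < \<zeta>"
    and z: "\<lfloor>\<bar>2 * real \<zeta>\<bar>\<rfloor> \<le> \<lfloor>\<bar>\<delta> * real \<beta>\<bar>\<rfloor>"
    and \<delta>: "\<lfloor>\<bar>2 * \<delta> * real \<beta>\<bar>\<rfloor> \<le> \<lfloor>\<bar>\<epsilon> * real \<alpha>\<bar>\<rfloor>"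
    and \<alpha>: "\<lfloor>\<bar>real \<alpha>\<bar>\<rfloor> \<le> \<lfloor>\<bar>real \<beta>\<bar>\<rfloor>"
  shows "2 * (\<delta> * \<beta>) + \<zeta> \<le> q * \<alpha> - 1" and "q * \<alpha> \<le> \<beta>"
proof -
  have "0 \<le> \<delta> * \<beta>" "0 \<le> \<epsilon> * \<alpha>"
    using assms(1,2) by simp_all
  moreover have "\<lfloor>2 * real \<zeta>\<rfloor> = 2 * int \<zeta>"
    by (metis floor_of_nat of_nat_mult of_nat_numeral)
  ultimately have "2 * \<zeta> \<le> \<lfloor>\<delta> * \<beta>\<rfloor>" and \<delta>\<epsilon>: "\<lfloor>2 * (\<delta> * \<beta>)\<rfloor> \<le> \<lfloor>\<epsilon> * \<alpha>\<rfloor>"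
    using z \<delta> by (simp_all add: mult.assoc)
  then have \<zeta>: "2 * \<zeta> \<le> \<delta> * \<beta>"
    by linarith
  then have "4 \<le> \<lfloor>2 * (\<delta> * \<beta>)\<rfloor>"
    using assms(5) by linarith
  then have "4 \<le> \<epsilon> * \<alpha>" "2 * (\<delta> * \<beta>) < \<epsilon> * \<alpha> + 1"
    using \<delta>\<epsilon> by linarith+
  moreover have "6 * (\<epsilon> * \<alpha>) \<le> q * \<alpha>"
    using assms(3) by (simp add: mult_right_mono flip: mult.assoc)
  ultimately show "2 * (\<delta> * \<beta>) + \<zeta> \<le> q * \<alpha> - 1"
    using \<zeta> by linarith
  have "q * \<alpha> \<le> \<alpha>"
    using assms(2,4) mult_right_mono[of q 1 "real \<alpha>"] by simp
  then show "q * \<alpha> \<le> \<beta>"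
    using \<alpha> by simp
qed

theorem lemma6p3:
  fixes G :: "('b, 'm) monoid_scheme" and act :: "'b \<Rightarrow> 'x \<Rightarrow> 'x" and X :: "'x set"
    and l :: nat and \<phi> :: "('g::{finite,ab_group_add}) pt \<Rightarrow> 'b"
    and z d a :: "nat \<Rightarrow> nat" and \<H> :: "'b set set"
    and \<epsilon> q \<delta> :: real and E :: "('x \<times> 'x) set" and U :: "'x set"
    and c :: "nat \<Rightarrow> int" and b :: "nat \<Rightarrow> nat" and x :: 'x
  assumes "group G" and "countable (carrier G)" and "group_action G X act"
    and "chart G l \<phi> z d \<H>"
    and "\<epsilon> > 0" and "6 * \<epsilon> < q" and "q < 1 - \<epsilon>"
    and "normvec l a"
    and "equiv X E"
    and "rectangular G act X l \<phi> z d \<H> a \<epsilon> E"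
    and "U \<in> X // E"
    and "normvec l c" and "normvec l b"
    and "roughly G act X l \<phi> z d \<H> \<delta> c b x U"
    and "rect_le l (\<lambda>i. real (a i)) (\<lambda>i. real (b i))"
    and "(rect l c (\<lambda>i. 2 ^ (22 * l) * real (b i)) :: 'g pt set) \<subseteq> domset l d"
    and "rect_le l (\<lambda>i. 2 * \<delta> * real (b i)) (\<lambda>i. \<epsilon> * real (a i))"
  shows "\<forall>i\<in>{1..l}.
     bdry G act X l \<phi> d \<H> E (\<lambda>j. q * real (a j)) i \<inter> U \<subseteq>
       phi_img act l \<phi> d
         (msum {(\<lambda>j. - int (b i) * unitv i j, 0)}
            (msum (rect l c ((\<lambda>j. real (b j))(i := 0))) (rect l 0 (\<lambda>j. 2 * q * real (a j))))) x
     \<union> phi_img act l \<phi> d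
         (msum {(\<lambda>j. int (b i) * unitv i j, 0)}
            (msum (rect l c ((\<lambda>j. real (b j))(i := 0))) (rect l 0 (\<lambda>j. 2 * q * real (a j))))) x"
proof -
  define D where "D j = \<delta> * real (b j)" for j
  have dom2: "(rect l c (\<lambda>j. 2 * real (b j)) :: 'g pt set) \<subseteq> domset l d"
    and x: "x \<in> X" "stabilizer G act x \<in> \<H>" and \<delta>: "0 < \<delta>"
    and z_le: "rect_le l (\<lambda>j. 2 * real (z j)) (\<lambda>j. \<delta> * real (b j))"
    and inner: "phi_img act l \<phi> d (rect l c (\<lambda>j. real (b j) - D j)) x \<subseteq> U"
    and outer: "U \<subseteq> phi_img act l \<phi> d (rect l c (\<lambda>j. real (b j) + D j)) x"
    using assms(14) unfolding roughly_def XH_def D_def by (auto simp: algebra_simps)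
  have bounds: "0 \<le> D j \<and> 2 * D j + real (z j) \<le> q * real (a j) - 1 \<and> q * real (a j) \<le> real (b j)"
    if "j \<in> {1..l}" for j
    using rough_scale_bounds[OF \<delta> assms(5-7), of "z j" "b j" "a j"] that \<delta> assms(4,15,17) z_le
    unfolding chart_def rect_le_def D_def by auto
  have "0 \<le> D j \<and> D j \<le> real (b j)" if "j \<in> {1..l}" for j
    using bounds[OF that] by auto
  then have inner_dom: "rect l c (\<lambda>j. real (b j) - D j) \<subseteq> (domset l d :: 'g pt set)"
    and face_dom: "rect l 0 (\<lambda>j. real (b j)) \<subseteq> (domset l d :: 'g pt set)"
    using rect_double_subset_domset[OF assms(12) dom2] by blast+
  have "2 * (q * real (a j)) \<le> \<bar>2 * q * real (a j)\<bar>" if "j \<in> {1..l}" for j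
    using bounds[OF that] by linarith
  then show ?thesis
    using bounds
    by (intro ballI bdry_inter_rough_class_subset[OF assms(4,3,9,11) x inner outer inner_dom face_dom])
qed

end
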